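(* Let $\underline{t}$ be an increment array of size $s$ for $n$ agents, with period $\pi(\underline{t})$. Then for all $1\le i\le j\le n$, \[C(i,\underline{t})=C(j,\underline{t})\iff \exists\, r\in\mathbb{Z},\ 0\le r\le \frac{(n-i)s}{n\,\pi(\underline{t})}\ :\ j=i+r\cdot\frac{n\,\pi(\underline{t})}{s}.\]
   Context: Agent identifiers are $\{1,\ldots,n\}$, arithmetic on identifiers is modulo $n$ with representatives in $\{1,\ldots,n\}$ (a value $0$ is replaced by $n$). An increment array (IA) of size $s$ ($1\le s\le n$) for $n$ agents is a tuple $\underline{t}=\langle t_0,\ldots,t_{s-1}\rangle$ of non-negative integers with $\sum t_i=n-s$. Cumulative increments: $\varphi_1=0$, $\varphi_i=\sum_{k=0}^{i-2}(t_k+1)$ for $2\le i\le s+1$. The coalition generated from $x$ is $C(x,\underline{t})=\{x\}\cup\bigcup_{i=2}^{s}\{(x+\varphi_i)\bmod n\}$ (residues in $\{1,\ldots,n\}$). The period $\pi(\underline{t})$ is the least $p\in\{1,\ldots,s\}$ such that $\underline{t}$ consists of $s/p$ identical consecutive copies of its prefix $\langle t_0,\ldots,t_{p-1}\rangle$ (in particular $p\mid s$). *)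

theory Defs
  imports Complex_Main
begin

definition modn :: "nat \<Rightarrow> int \<Rightarrow> nat" where
  "modn n x = (if x mod int n = 0 then n else nat (x mod int n))"

definition is_IA :: "nat \<Rightarrow> nat \<Rightarrow> nat list \<Rightarrow> bool" where
  "is_IA n s t \<longleftrightarrow> 1 \<le> s \<and> s \<le> n \<and> length t = s \<and> sum_list t = n - s"

definition phi :: "nat list \<Rightarrow> nat \<Rightarrow> nat" where
  "phi t i = (\<Sum>k = 0..<i - 1. t ! k + 1)"

definition coalition :: "nat \<Rightarrow> nat \<Rightarrow> nat list \<Rightarrow> nat set" where
  "coalition n x t = {x} \<union> (\<Union>i\<in>{2..length t}. {modn n (int x + int (phi t i))})"

definition is_period :: "nat list \<Rightarrow> nat \<Rightarrow> bool" where
  "is_period t p \<longleftrightarrow> 1 \<le> p \<and> p \<le> length t \<and> p dvd length t \<and>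
     t = concat (replicate (length t div p) (take p t))"

definition period :: "nat list \<Rightarrow> nat" where
  "period t = (LEAST p. is_period t p)"

end

theory Submission
  imports Defs "HOL-Number_Theory.Cong"
begin

(* Extend the increments periodically, so that cyclic_phi t enumerates all sums
   t_0 + ... + t_(l-1) + l.  Its range R is a union of residue classes modulo
   n = sum_list t + length t, and the coalition of x is the translate x + R read modulo n.
   Hence C(i) = C(j) iff R is invariant under translation by k = j - i.  If it is, then
   k = cyclic_phi t m for some m (because 0 is in R), and the part of R above k is
   enumerated in increasing order both by l \<mapsto> cyclic_phi t (l + m) and by
   l \<mapsto> cyclic_phi t l + k; so the two maps agree and m is a shift period of the
   increments.  Since pi(t) is one too, so is gcd(m, pi(t)) by Bezout, and minimality
   of the period gives pi(t) | m.  Thus k is a multiple of cyclic_phi t pi(t), which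
   equals n pi(t) / s; conversely every such multiple leaves R invariant. *)

lemma nth_concat_replicate:
  "l < q * length u \<Longrightarrow> concat (replicate q u) ! l = u ! (l mod length u)"
proof (induction q arbitrary: l)
  case (Suc q)
  then show ?case
    by (cases "l < length u") (auto simp: nth_append mod_if)
qed simp

lemma concat_replicate_take_iff:
  assumes "0 < p" "p dvd length xs"
  shows "xs = concat (replicate (length xs div p) (take p xs)) \<longleftrightarrow>
    (\<forall>l < length xs. xs ! l = xs ! (l mod p))"
proof (cases "xs = []")
  case False
  then have "p \<le> length xs"
    using assms(2) by (simp add: dvd_imp_le)
  then have "length (concat (replicate (length xs div p) (take p xs))) = length xs"
    using assms by (simp add: length_concat sum_list_replicate)
  moreover have "concat (replicate (length xs div p) (take p xs)) ! l = xs ! (l mod p)"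
    if "l < length xs" for l
  proof -
    have "l mod p < length xs"
      using assms(1) \<open>p \<le> length xs\<close> by (meson mod_less_divisor order_less_le_trans)
    then show ?thesis
      using that assms \<open>p \<le> length xs\<close> nth_concat_replicate[of l "length xs div p" "take p xs"]
      by (simp add: min_def)
  qed
  ultimately show ?thesis
    by (metis nth_equalityI)
qed simp

lemma strict_mono_range_subset_le:
  fixes f g :: "nat \<Rightarrow> 'a::linorder"
  assumes "strict_mono f" "strict_mono g" "range f \<subseteq> range g"
  shows "g n \<le> f n"
proof -
  define h where "h = inv g \<circ> f"
  have h: "f l = g (h l)" for l
    using assms(3) unfolding h_def by (simp add: f_inv_into_f range_subsetD)
  have "strict_mono h"
  proof (rule strict_monoI)
    fix a b :: nat assume "a < b"
    then have "g (h a) < g (h b)"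
      using assms(1) by (simp add: strict_mono_less flip: h)
    then show "h a < h b"
      using assms(2) by (simp add: strict_mono_less)
  qed
  then have "n \<le> h n" by (rule strict_mono_imp_increasing)
  then show ?thesis
    using assms(2) h by (simp add: strict_mono_less_eq)
qed

lemma strict_mono_range_eq:
  fixes f g :: "nat \<Rightarrow> 'a::linorder"
  assumes "strict_mono f" "strict_mono g" "range f = range g"
  shows "f = g"
  using strict_mono_range_subset_le[OF assms(1,2)] strict_mono_range_subset_le[OF assms(2,1)] assms(3)
  by (intro ext antisym) auto

lemma image_add_mod_eq_iff_shift_invariant:
  fixes E :: "nat set"
  assumes "0 < n" and closed: "\<And>y y'. y \<in> E \<Longrightarrow> [y = y'] (mod n) \<Longrightarrow> y' \<in> E"
  shows "(\<lambda>y. (x + y) mod n) ` E = (\<lambda>y. (x + k + y) mod n) ` E \<longleftrightarrow> (\<forall>y. y \<in> E \<longleftrightarrow> y + k \<in> E)"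
proof
  assume eq: "(\<lambda>y. (x + y) mod n) ` E = (\<lambda>y. (x + k + y) mod n) ` E"
  have "y + k \<in> E" if "y \<in> E" for y
  proof -
    have "(x + k + y) mod n \<in> (\<lambda>y. (x + y) mod n) ` E"
      using eq that by blast
    then obtain y' where "y' \<in> E" "[x + y' = x + (y + k)] (mod n)"
      by (auto simp: cong_def ac_simps)
    then show ?thesis
      using closed by (simp add: cong_add_lcancel_nat)
  qed
  moreover have "y \<in> E" if "y + k \<in> E" for y
  proof -
    have "(x + (y + k)) mod n \<in> (\<lambda>y. (x + k + y) mod n) ` E"
      using eq that by blast
    then obtain y' where "y' \<in> E" "[x + k + y' = x + k + y] (mod n)"
      by (auto simp: cong_def ac_simps)
    then show ?thesis
      using closed by (simp add: cong_add_lcancel_nat)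
  qed
  ultimately show "\<forall>y. y \<in> E \<longleftrightarrow> y + k \<in> E" by blast
next
  assume inv: "\<forall>y. y \<in> E \<longleftrightarrow> y + k \<in> E"
  show "(\<lambda>y. (x + y) mod n) ` E = (\<lambda>y. (x + k + y) mod n) ` E"
  proof (intro equalityI subsetI)
    fix w assume "w \<in> (\<lambda>y. (x + y) mod n) ` E"
    then obtain y where y: "y \<in> E" "w = (x + y) mod n" by blast
    \<comment> \<open>the representative of y - k that stays in the natural numbers\<close>
    let ?y' = "y + (n - 1) * k"
    have y'_add_k: "?y' + k = y + k * n"
      using \<open>0 < n\<close> by (cases n) (simp_all add: algebra_simps)
    then have "[y = ?y' + k] (mod n)"
      by (simp only: cong_def mod_mult_self1)
    then have "?y' \<in> E"
      using closed[OF y(1)] inv by blast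
    moreover have "x + k + ?y' = (x + y) + k * n"
      using y'_add_k by simp
    then have "w = (x + k + ?y') mod n"
      using y(2) by (simp only: mod_mult_self1)
    ultimately show "w \<in> (\<lambda>y. (x + k + y) mod n) ` E" by blast
  next
    fix w assume "w \<in> (\<lambda>y. (x + k + y) mod n) ` E"
    then obtain y where "y \<in> E" "w = (x + (y + k)) mod n" by (auto simp: ac_simps)
    then show "w \<in> (\<lambda>y. (x + y) mod n) ` E" using inv by blast
  qed
qed

(* The upper bound on r is redundant given j \<le> n. *)
lemma bounded_multiple_step_iff_dvd:
  fixes d i j n :: nat
  assumes "0 < d" "i \<le> j" "j \<le> n"
  shows "(\<exists>r::int. 0 \<le> r \<and> (of_int r :: 'a::linordered_field) \<le> of_nat (n - i) / of_nat d \<and>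
      (of_nat j :: 'a) = of_nat i + of_int r * of_nat d) \<longleftrightarrow> d dvd j - i"
proof
  assume "\<exists>r::int. 0 \<le> r \<and> (of_int r :: 'a) \<le> of_nat (n - i) / of_nat d \<and>
      (of_nat j :: 'a) = of_nat i + of_int r * of_nat d"
  then obtain r :: int where r: "0 \<le> r" "(of_nat j :: 'a) = of_nat i + of_int r * of_nat d"
    by blast
  obtain c where "r = int c" using r(1) nonneg_int_cases by blast
  then have "(of_nat j :: 'a) = of_nat (i + c * d)"
    using r(2) by simp
  then have "j = i + c * d"
    by (simp only: of_nat_eq_iff)
  then show "d dvd j - i" by simp
next
  assume "d dvd j - i"
  then obtain c where c: "j - i = c * d" by (metis dvdE mult.commute)
  have "c * d \<le> n - i" using c assms by simp
  then have "(of_nat c :: 'a) \<le> of_nat (n - i) / of_nat d"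
    using assms(1) by (simp add: pos_le_divide_eq flip: of_nat_mult)
  moreover have "j = i + c * d"
    using c assms(2) by simp
  ultimately show "\<exists>r::int. 0 \<le> r \<and> (of_int r :: 'a) \<le> of_nat (n - i) / of_nat d \<and>
      (of_nat j :: 'a) = of_nat i + of_int r * of_nat d"
    by (intro exI[of _ "int c"]) simp
qed

definition cyclic_incr :: "nat list \<Rightarrow> nat \<Rightarrow> nat" where
  "cyclic_incr t l = t ! (l mod length t)"

definition cyclic_phi :: "nat list \<Rightarrow> nat \<Rightarrow> nat" where
  "cyclic_phi t l = (\<Sum>k<l. cyclic_incr t k + 1)"

definition shift_period :: "nat list \<Rightarrow> nat \<Rightarrow> bool" where
  "shift_period t a \<longleftrightarrow> (\<forall>l. cyclic_incr t (l + a) = cyclic_incr t l)"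

lemma cyclic_phi_0 [simp]: "cyclic_phi t 0 = 0"
  by (simp add: cyclic_phi_def)

lemma cyclic_phi_Suc: "cyclic_phi t (Suc l) = cyclic_phi t l + cyclic_incr t l + 1"
  by (simp add: cyclic_phi_def)

lemma strict_mono_cyclic_phi: "strict_mono (cyclic_phi t)"
  by (simp add: strict_mono_Suc_iff cyclic_phi_Suc)

lemma phi_eq_cyclic_phi: "i \<le> length t \<Longrightarrow> phi t i = cyclic_phi t (i - 1)"
  unfolding phi_def cyclic_phi_def cyclic_incr_def atLeast0LessThan by (rule sum.cong) auto

lemma cyclic_phi_length: "cyclic_phi t (length t) = sum_list t + length t"
proof -
  have "cyclic_phi t (length t) = (\<Sum>k<length t. t ! k + 1)"
    unfolding cyclic_phi_def cyclic_incr_def by (rule sum.cong) auto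
  also have "\<dots> = sum_list t + length t"
    by (simp only: sum.distrib sum_list_sum_nth atLeast0LessThan) simp
  finally show ?thesis .
qed

lemma shift_period_length: "shift_period t (length t)"
  by (simp add: shift_period_def cyclic_incr_def)

lemma shift_period_mult: "shift_period t p \<Longrightarrow> shift_period t (c * p)"
  by (induction c) (auto simp: shift_period_def add.assoc[symmetric])

lemma cyclic_incr_mod_shift_period:
  assumes "shift_period t p" shows "cyclic_incr t l = cyclic_incr t (l mod p)"
  using shift_period_mult[OF assms, of "l div p"]
  by (metis shift_period_def mod_div_mult_eq)

lemma shift_period_gcd:
  assumes a: "shift_period t a" and b: "shift_period t b" and "b \<noteq> 0"
  shows "shift_period t (gcd a b)"
proof -
  obtain x y where xy: "b * x = a * y + gcd b a" using bezout_nat \<open>b \<noteq> 0\<close> by blast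
  have "cyclic_incr t (l + gcd a b) = cyclic_incr t l" for l
  proof -
    have "cyclic_incr t (l + gcd a b) = cyclic_incr t (l + gcd a b + y * a)"
      using shift_period_mult[OF a, of y] by (simp add: shift_period_def)
    also have "\<dots> = cyclic_incr t (l + x * b)"
      using xy by (simp add: gcd.commute algebra_simps)
    also have "\<dots> = cyclic_incr t l"
      using shift_period_mult[OF b, of x] by (simp add: shift_period_def)
    finally show ?thesis .
  qed
  then show ?thesis by (simp add: shift_period_def)
qed

lemma cyclic_phi_add_shift_period:
  assumes "shift_period t p" shows "cyclic_phi t (l + p) = cyclic_phi t l + cyclic_phi t p"
proof (induction l)
  case (Suc l)
  then show ?case
    using assms by (simp add: cyclic_phi_Suc shift_period_def)
qed simp

lemma cyclic_phi_add_mult_shift_period: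
  assumes "shift_period t p"
  shows "cyclic_phi t (l + c * p) = cyclic_phi t l + c * cyclic_phi t p"
proof (induction c)
  case (Suc c)
  have "cyclic_phi t (l + Suc c * p) = cyclic_phi t (l + c * p) + cyclic_phi t p"
    using cyclic_phi_add_shift_period[OF assms, of "l + c * p"] by (simp add: algebra_simps)
  with Suc show ?case by simp
qed simp

lemma shift_period_iff_nth_mod:
  assumes "t \<noteq> []" "p dvd length t"
  shows "shift_period t p \<longleftrightarrow> (\<forall>l < length t. t ! l = t ! (l mod p))"
proof
  assume p: "shift_period t p"
  show "\<forall>l < length t. t ! l = t ! (l mod p)"
  proof (intro allI impI)
    fix l assume l: "l < length t"
    then have "l mod p < length t"
      by (meson mod_less_eq_dividend le_less_trans)
    then show "t ! l = t ! (l mod p)"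
      using cyclic_incr_mod_shift_period[OF p, of l] l by (simp add: cyclic_incr_def)
  qed
next
  assume nth_mod: "\<forall>l < length t. t ! l = t ! (l mod p)"
  have "cyclic_incr t l = t ! (l mod p)" for l
    using nth_mod assms by (simp add: cyclic_incr_def mod_mod_cancel)
  then show "shift_period t p"
    by (simp add: shift_period_def)
qed

lemma is_period_iff_shift_period:
  assumes "t \<noteq> []"
  shows "is_period t p \<longleftrightarrow> 0 < p \<and> p dvd length t \<and> shift_period t p"
  using assms concat_replicate_take_iff[of p t] shift_period_iff_nth_mod[OF assms, of p]
  by (auto simp: is_period_def dvd_imp_le)

lemma is_period_period:
  assumes "t \<noteq> []" shows "is_period t (period t)"
proof -
  have "is_period t (length t)"
    using assms by (simp add: is_period_iff_shift_period shift_period_length)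
  then show ?thesis unfolding period_def by (rule LeastI)
qed

lemma period_pos: "t \<noteq> [] \<Longrightarrow> 0 < period t"
  using is_period_period is_period_iff_shift_period by blast

lemma period_dvd_length: "t \<noteq> [] \<Longrightarrow> period t dvd length t"
  using is_period_period is_period_iff_shift_period by blast

lemma shift_period_period: "t \<noteq> [] \<Longrightarrow> shift_period t (period t)"
  using is_period_period is_period_iff_shift_period by blast

lemma period_dvd_shift_period:
  assumes "t \<noteq> []" and m: "shift_period t m"
  shows "period t dvd m"
proof -
  let ?p = "period t"
  have "shift_period t (gcd m ?p)"
    using m shift_period_period[OF assms(1)] period_pos[OF assms(1)] by (simp add: shift_period_gcd)
  moreover have "gcd m ?p dvd length t"
    using period_dvd_length[OF assms(1)] by (rule dvd_trans[rotated]) simp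
  ultimately have "is_period t (gcd m ?p)"
    using period_pos[OF assms(1)] is_period_iff_shift_period[OF assms(1)] by simp
  then have "?p \<le> gcd m ?p"
    unfolding period_def by (rule Least_le)
  then have "gcd m ?p = ?p"
    using period_pos[OF assms(1)] by (simp add: dvd_imp_le le_antisym)
  then show ?thesis by (metis gcd_dvd1)
qed

lemma cyclic_phi_period_mult_length:
  assumes "t \<noteq> []"
  shows "cyclic_phi t (period t) * length t = (sum_list t + length t) * period t"
proof -
  let ?p = "period t"
  obtain q where q: "length t = q * ?p"
    using period_dvd_length[OF assms] by (metis dvdE mult.commute)
  have "sum_list t + length t = q * cyclic_phi t ?p"
    using cyclic_phi_add_mult_shift_period[OF shift_period_period[OF assms], of 0 q] q
      cyclic_phi_length[of t]
    by simp
  then show ?thesis using q by simp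
qed

lemma cyclic_phi_mod_length:
  assumes "t \<noteq> []"
  shows "cyclic_phi t l mod (sum_list t + length t) = cyclic_phi t (l mod length t)"
proof -
  let ?N = "sum_list t + length t" and ?l0 = "l mod length t"
  have "cyclic_phi t l = cyclic_phi t ?l0 + (l div length t) * ?N"
    using cyclic_phi_add_mult_shift_period[OF shift_period_length, of t ?l0 "l div length t"]
    by (simp add: cyclic_phi_length)
  moreover have "cyclic_phi t ?l0 < cyclic_phi t (length t)"
    using assms strict_mono_cyclic_phi[of t] by (simp add: strict_mono_less)
  ultimately show ?thesis
    by (simp add: cyclic_phi_length)
qed

lemma image_add_cyclic_phi_mod_length:
  assumes "t \<noteq> []"
  defines "N \<equiv> sum_list t + length t"
  shows "(\<lambda>l. (z + cyclic_phi t l) mod N) ` {..<length t} = (\<lambda>y. (z + y) mod N) ` range (cyclic_phi t)"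
proof (intro equalityI subsetI)
  fix w assume "w \<in> (\<lambda>y. (z + y) mod N) ` range (cyclic_phi t)"
  then obtain l where "w = (z + cyclic_phi t l) mod N" by blast
  also have "\<dots> = (z + cyclic_phi t l mod N) mod N" by (simp add: mod_add_right_eq)
  also have "\<dots> = (z + cyclic_phi t (l mod length t)) mod N"
    using cyclic_phi_mod_length[OF assms(1)] by (simp add: N_def)
  finally show "w \<in> (\<lambda>l. (z + cyclic_phi t l) mod N) ` {..<length t}"
    using assms(1) by auto
qed auto

lemma cong_range_cyclic_phi:
  assumes "t \<noteq> []" and y: "y \<in> range (cyclic_phi t)"
    and cong: "[y = y'] (mod (sum_list t + length t))"
  shows "y' \<in> range (cyclic_phi t)"
proof -
  let ?N = "sum_list t + length t"
  obtain l where "y = cyclic_phi t l" using y by blast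
  then have "y' mod ?N = cyclic_phi t (l mod length t)"
    using cong cyclic_phi_mod_length[OF assms(1)] by (simp add: cong_def)
  then have "y' = cyclic_phi t (l mod length t + (y' div ?N) * length t)"
    using cyclic_phi_add_mult_shift_period[OF shift_period_length, of t "l mod length t" "y' div ?N"]
    by (metis cyclic_phi_length mod_div_mult_eq)
  then show ?thesis by (metis rangeI)
qed

lemma cyclic_phi_add_of_shift_invariant:
  assumes inv: "\<And>y. y \<in> range (cyclic_phi t) \<longleftrightarrow> y + cyclic_phi t m \<in> range (cyclic_phi t)"
  shows "cyclic_phi t (l + m) = cyclic_phi t l + cyclic_phi t m"
proof -
  let ?R = "range (cyclic_phi t)" and ?k = "cyclic_phi t m"
  have mono: "strict_mono (cyclic_phi t)" by (rule strict_mono_cyclic_phi)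
  have "range (\<lambda>l. cyclic_phi t (l + m)) = {y \<in> ?R. ?k \<le> y}"
  proof (intro equalityI subsetI)
    fix y assume "y \<in> range (\<lambda>l. cyclic_phi t (l + m))"
    then obtain l where "y = cyclic_phi t (l + m)" by blast
    then show "y \<in> {y \<in> ?R. ?k \<le> y}"
      using mono by (simp add: strict_mono_less_eq)
  next
    fix y assume "y \<in> {y \<in> ?R. ?k \<le> y}"
    then obtain a where a: "y = cyclic_phi t a" "?k \<le> cyclic_phi t a" by blast
    then have "y = cyclic_phi t ((a - m) + m)"
      using mono by (simp add: strict_mono_less_eq)
    then show "y \<in> range (\<lambda>l. cyclic_phi t (l + m))" by blast
  qed
  moreover have "range (\<lambda>l. cyclic_phi t l + ?k) = {y \<in> ?R. ?k \<le> y}"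
  proof (intro equalityI subsetI)
    fix y assume "y \<in> range (\<lambda>l. cyclic_phi t l + ?k)"
    then obtain l where "y = cyclic_phi t l + ?k" by blast
    then show "y \<in> {y \<in> ?R. ?k \<le> y}"
      using inv[of "cyclic_phi t l"] by simp
  next
    fix y assume y: "y \<in> {y \<in> ?R. ?k \<le> y}"
    then have "y - ?k \<in> ?R"
      using inv[of "y - ?k"] by simp
    then obtain b where "y - ?k = cyclic_phi t b" by blast
    then have "y = cyclic_phi t b + ?k" using y by auto
    then show "y \<in> range (\<lambda>l. cyclic_phi t l + ?k)" by blast
  qed
  moreover have "strict_mono (\<lambda>l. cyclic_phi t (l + m))" "strict_mono (\<lambda>l. cyclic_phi t l + ?k)"
    unfolding strict_mono_def using mono by (simp_all add: strict_mono_less)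
  ultimately have "(\<lambda>l. cyclic_phi t (l + m)) = (\<lambda>l. cyclic_phi t l + ?k)"
    using strict_mono_range_eq by metis
  then show ?thesis by (rule fun_cong)
qed

lemma shift_period_of_shift_invariant:
  assumes "\<And>y. y \<in> range (cyclic_phi t) \<longleftrightarrow> y + cyclic_phi t m \<in> range (cyclic_phi t)"
  shows "shift_period t m"
proof -
  have "cyclic_incr t (l + m) = cyclic_incr t l" for l
    using cyclic_phi_add_of_shift_invariant[OF assms, of "Suc l"]
      cyclic_phi_add_of_shift_invariant[OF assms, of l]
    by (simp add: cyclic_phi_Suc)
  then show ?thesis by (simp add: shift_period_def)
qed

lemma cyclic_phi_period_dvd_of_shift_invariant:
  assumes "t \<noteq> []" and inv: "\<forall>y. y \<in> range (cyclic_phi t) \<longleftrightarrow> y + k \<in> range (cyclic_phi t)"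
  shows "cyclic_phi t (period t) dvd k"
proof -
  have "cyclic_phi t 0 + k \<in> range (cyclic_phi t)"
    using inv by blast
  then obtain m where k: "k = cyclic_phi t m"
    by (metis add_0 cyclic_phi_0 rangeE)
  have "shift_period t m"
    using inv k by (intro shift_period_of_shift_invariant) blast
  then obtain c where "m = c * period t"
    using period_dvd_shift_period[OF assms(1)] by (metis dvdE mult.commute)
  then show ?thesis
    using k cyclic_phi_add_mult_shift_period[OF shift_period_period[OF assms(1)], of 0 c] by simp
qed

lemma range_cyclic_phi_add_mult_shift_period:
  assumes p: "shift_period t p"
  shows "y + c * cyclic_phi t p \<in> range (cyclic_phi t) \<longleftrightarrow> y \<in> range (cyclic_phi t)"
proof
  assume "y + c * cyclic_phi t p \<in> range (cyclic_phi t)"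
  then obtain a where a: "y + c * cyclic_phi t p = cyclic_phi t a" by blast
  then have "cyclic_phi t (0 + c * p) \<le> cyclic_phi t a"
    using cyclic_phi_add_mult_shift_period[OF p, of 0 c] by simp
  then have "c * p \<le> a"
    using strict_mono_cyclic_phi by (simp add: strict_mono_less_eq)
  then have "y + c * cyclic_phi t p = cyclic_phi t (a - c * p) + c * cyclic_phi t p"
    using a cyclic_phi_add_mult_shift_period[OF p, of "a - c * p" c] by simp
  then show "y \<in> range (cyclic_phi t)" by (metis add_right_cancel rangeI)
next
  assume "y \<in> range (cyclic_phi t)"
  then show "y + c * cyclic_phi t p \<in> range (cyclic_phi t)"
    using cyclic_phi_add_mult_shift_period[OF p] by (metis rangeE rangeI)
qed

lemma shift_invariant_range_cyclic_phi_iff: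
  assumes "t \<noteq> []"
  shows "(\<forall>y. y \<in> range (cyclic_phi t) \<longleftrightarrow> y + k \<in> range (cyclic_phi t))
    \<longleftrightarrow> cyclic_phi t (period t) dvd k"
proof
  assume "cyclic_phi t (period t) dvd k"
  then obtain c where "k = c * cyclic_phi t (period t)"
    by (metis dvdE mult.commute)
  then show "\<forall>y. y \<in> range (cyclic_phi t) \<longleftrightarrow> y + k \<in> range (cyclic_phi t)"
    using range_cyclic_phi_add_mult_shift_period[OF shift_period_period[OF assms]] by simp
qed (rule cyclic_phi_period_dvd_of_shift_invariant[OF assms])

lemma modn_of_nat: "0 < n \<Longrightarrow> modn n (int a) = (if a mod n = 0 then n else a mod n)"
  unfolding modn_def by (simp add: of_nat_mod[symmetric])

lemma coalition_eq_image_cyclic_phi: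
  assumes "t \<noteq> []" and "x \<in> {1..n}"
  shows "coalition n x t = (\<lambda>l. modn n (int (x + cyclic_phi t l))) ` {..<length t}"
proof -
  have "{..<length t} = insert 0 ((\<lambda>i. i - 1) ` {2..length t})"
  proof (intro equalityI subsetI)
    fix l assume "l \<in> {..<length t}"
    then show "l \<in> insert 0 ((\<lambda>i. i - 1) ` {2..length t})"
      by (cases l) (auto intro!: image_eqI[of _ _ "l + 1"])
  qed (use assms(1) in auto)
  moreover have "modn n (int (x + cyclic_phi t 0)) = x"
    using assms(2) by (cases "x = n") (auto simp: modn_of_nat)
  moreover have "modn n (int x + int (phi t i)) = modn n (int (x + cyclic_phi t (i - 1)))"
    if "i \<in> {2..length t}" for i
    using that by (simp add: phi_eq_cyclic_phi)
  ultimately show ?thesis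
    unfolding coalition_def by (auto simp: image_image)
qed

lemma coalition_eq_coalition_iff:
  assumes "t \<noteq> []" and n: "n = sum_list t + length t" and "x \<in> {1..n}" "x' \<in> {1..n}"
  shows "coalition n x t = coalition n x' t \<longleftrightarrow>
    (\<lambda>y. (x + y) mod n) ` range (cyclic_phi t) = (\<lambda>y. (x' + y) mod n) ` range (cyclic_phi t)"
proof -
  let ?g = "\<lambda>r. if r = 0 then n else r"
  let ?A = "\<lambda>z. (\<lambda>y. (z + y) mod n) ` range (cyclic_phi t)"
  have "0 < n" using assms(1) n by simp
  note residues = image_add_cyclic_phi_mod_length[OF assms(1), folded n]
  have coalition: "coalition n z t = ?g ` ?A z" if "z \<in> {1..n}" for z
  proof -
    have "coalition n z t = ?g ` (\<lambda>l. (z + cyclic_phi t l) mod n) ` {..<length t}"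
      unfolding coalition_eq_image_cyclic_phi[OF assms(1) that] modn_of_nat[OF \<open>0 < n\<close>]
      by (simp only: image_image)
    then show ?thesis by (simp only: residues)
  qed
  have residue_g: "?g r mod n = r" if "r < n" for r
    using that by simp
  have g_inverse: "(\<lambda>w. w mod n) ` ?g ` ?A z = ?A z" for z
  proof -
    have "(\<lambda>w. w mod n) ` ?g ` ?A z = (\<lambda>y. ?g ((z + y) mod n) mod n) ` range (cyclic_phi t)"
      by (simp only: image_image)
    also have "\<dots> = ?A z"
      using \<open>0 < n\<close> by (intro image_cong refl residue_g) simp
    finally show ?thesis .
  qed
  show ?thesis
  proof
    assume "coalition n x t = coalition n x' t"
    then have "(\<lambda>w. w mod n) ` ?g ` ?A x = (\<lambda>w. w mod n) ` ?g ` ?A x'"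
      using coalition assms(3,4) by simp
    then show "?A x = ?A x'"
      by (simp only: g_inverse)
  qed (use coalition assms(3,4) in simp)
qed

theorem theorem6:
  fixes n s :: nat and t :: "nat list" and i j :: nat
  assumes "is_IA n s t"
    and "1 \<le> i" and "i \<le> j" and "j \<le> n"
  shows "coalition n i t = coalition n j t \<longleftrightarrow>
    (\<exists>r::int. 0 \<le> r \<and>
       (of_int r :: rat) \<le> (of_nat (n - i) * of_nat s) / (of_nat n * of_nat (period t)) \<and>
       (of_nat j :: rat) = of_nat i + of_int r * (of_nat n * of_nat (period t) / of_nat s))"
proof -
  from assms(1) have t: "t \<noteq> []" and s: "length t = s" "0 < s" and n: "n = sum_list t + length t"
    by (auto simp: is_IA_def)
  let ?R = "range (cyclic_phi t)" and ?p = "period t"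
  let ?d = "cyclic_phi t ?p"
  have "0 < ?d"
    using period_pos[OF t] strict_mono_cyclic_phi[of t] by (metis cyclic_phi_0 strict_mono_less)
  have d_s: "(of_nat ?d :: rat) * of_nat s = of_nat n * of_nat ?p"
    using cyclic_phi_period_mult_length[OF t] s(1) n by (metis of_nat_mult)
  then have step: "(of_nat n * of_nat ?p / of_nat s :: rat) = of_nat ?d"
    using s(2) by (simp add: field_simps)
  have bound: "(of_nat (n - i) * of_nat s) / (of_nat n * of_nat ?p) = (of_nat (n - i) / of_nat ?d :: rat)"
    unfolding d_s[symmetric] using s(2) by simp
  have "coalition n i t = coalition n j t \<longleftrightarrow>
      (\<lambda>y. (i + y) mod n) ` ?R = (\<lambda>y. (i + (j - i) + y) mod n) ` ?R"
    using coalition_eq_coalition_iff[OF t n] assms(2-4) by simp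
  also have "\<dots> \<longleftrightarrow> (\<forall>y. y \<in> ?R \<longleftrightarrow> y + (j - i) \<in> ?R)"
    using t n cong_range_cyclic_phi[OF t]
    by (intro image_add_mod_eq_iff_shift_invariant) simp_all
  also have "\<dots> \<longleftrightarrow> ?d dvd j - i"
    by (rule shift_invariant_range_cyclic_phi_iff[OF t])
  finally show ?thesis
    unfolding step bound
    using bounded_multiple_step_iff_dvd[where 'a = rat, OF \<open>0 < ?d\<close> assms(3,4)] by simp
qed

end
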